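(* There exists an absolute constant $C>0$ such that for every number of items $m\ge2$ there exist a unit-demand value distribution $\mathcal{D}$ over $m$ items and a production cost vector $c\in\mathbb{R}_+^m$ with $$\textsc{BuyManyProfit}_c(\mathcal{D})\ \ge\ C\,m\,\textsc{SProfit}_c(\mathcal{D}),$$ i.e. $\textsc{BuyManyProfit}_c(\mathcal{D})=\Omega(m)\,\textsc{SProfit}_c(\mathcal{D})$.
   Context: Unit-demand buyer: valuation $v$ with $v_j\ge0$ per item, $v(S)=\max_{j\in S}v_j$. Lotteries $\lambda\in\Delta_m=\{\lambda\in[0,1]^m:\sum_j\lambda_j\le1\}$, $v(\lambda)=\sum_jv_j\lambda_j$. A pricing function $p$ assigns a price $p(\lambda)\ge0$ to every lottery; buyer $v$ chooses $\lambda_{v,p}\in\arg\max_\lambda(v(\lambda)-p(\lambda))$. $p$ is buy-many if no buyer type can get higher utility by adaptively purchasing a (random) sequence of lotteries (each depending on previous outcomes), receiving the union of allocated items and paying the sum of prices, than by buying a single lottery. An item pricing is a vector $(p_1,\dots,p_m)\in\mathbb{R}_+^m$, i.e. $p(\lambda)=\sum_jp_j\lambda_j$ with the buyer buying an item maximizing $v_j-p_j$ (if nonnegative). Given production costs $c\in\mathbb{R}_+^m$, the profit of pricing $p$ is $\textsc{Profit}_{p,c}(\mathcal{D})=\mathbb{E}_{v\sim\mathcal{D}}[p(\lambda_{v,p})-c\cdot\lambda_{v,p}]$; $\textsc{SProfit}_c(\mathcal{D})$ is the maximum profit over item pricings, and $\textsc{BuyManyProfit}_c(\mathcal{D})$ the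 maximum profit over buy-many pricings. *)

theory Defs
  imports "HOL-Probability.Probability"
begin

text \<open>Items are 0,...,m-1. A valuation is a function nat => real (only the
values at j < m matter). A lottery is a function nat => real vanishing outside
the items.\<close>

type_synonym valuation = "nat \<Rightarrow> real"
type_synonym lottery = "nat \<Rightarrow> real"
type_synonym pricing = "lottery \<Rightarrow> real"

definition lotteries :: "nat \<Rightarrow> lottery set" where
  "lotteries m = {l. (\<forall>j. 0 \<le> l j \<and> l j \<le> 1) \<and> (\<forall>j\<ge>m. l j = 0) \<and> (\<Sum>j<m. l j) \<le> 1}"

definition lval :: "nat \<Rightarrow> valuation \<Rightarrow> lottery \<Rightarrow> real" where
  "lval m v l = (\<Sum>j<m. v j * l j)"

definition setval :: "valuation \<Rightarrow> nat set \<Rightarrow> real" where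
  "setval v S = (if S = {} then 0 else Max (v ` S))"

definition unit_demand :: "nat \<Rightarrow> valuation \<Rightarrow> bool" where
  "unit_demand m v \<longleftrightarrow> (\<forall>j<m. 0 \<le> v j)"

text \<open>Adaptive purchasing strategies: stop, or buy a lottery and continue
depending on the outcome (Some j = item j allocated, None = nothing).\<close>
datatype strategy = Stop | Buy lottery "nat option \<Rightarrow> strategy"

primrec valid_strategy :: "nat \<Rightarrow> strategy \<Rightarrow> bool" where
  "valid_strategy m Stop = True"
| "valid_strategy m (Buy l k) = (l \<in> lotteries m \<and> (\<forall>r. valid_strategy m (k r)))"

text \<open>Expected utility of following a strategy, having already obtained the items in S.\<close>
primrec strat_util :: "nat \<Rightarrow> valuation \<Rightarrow> pricing \<Rightarrow> strategy \<Rightarrow> nat set \<Rightarrow> real" where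
  "strat_util m v p Stop S = setval v S"
| "strat_util m v p (Buy l k) S =
     - p l + (\<Sum>j<m. l j * strat_util m v p (k (Some j)) (insert j S))
     + (1 - (\<Sum>j<m. l j)) * strat_util m v p (k None) S"

definition pricing_fn :: "nat \<Rightarrow> pricing \<Rightarrow> bool" where
  "pricing_fn m p \<longleftrightarrow> (\<forall>l\<in>lotteries m. 0 \<le> p l)"

definition buy_many :: "nat \<Rightarrow> pricing \<Rightarrow> bool" where
  "buy_many m p \<longleftrightarrow> pricing_fn m p \<and>
     (\<forall>v s. unit_demand m v \<and> valid_strategy m s \<longrightarrow>
        strat_util m v p s {} \<le> (SUP l\<in>lotteries m. lval m v l - p l))"

definition item_pricing :: "nat \<Rightarrow> (nat \<Rightarrow> real) \<Rightarrow> pricing" where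
  "item_pricing m q = (\<lambda>l. \<Sum>j<m. q j * l j)"

definition optimal :: "nat \<Rightarrow> pricing \<Rightarrow> valuation \<Rightarrow> lottery set" where
  "optimal m p v = {l \<in> lotteries m. \<forall>l'\<in>lotteries m. lval m v l' - p l' \<le> lval m v l - p l}"

definition valid_choice :: "nat \<Rightarrow> pricing \<Rightarrow> valuation pmf \<Rightarrow> (valuation \<Rightarrow> lottery) \<Rightarrow> bool" where
  "valid_choice m p D sel \<longleftrightarrow> (\<forall>v\<in>set_pmf D. sel v \<in> optimal m p v)"

definition Profit :: "nat \<Rightarrow> (nat \<Rightarrow> real) \<Rightarrow> valuation pmf \<Rightarrow> pricing \<Rightarrow> (valuation \<Rightarrow> lottery) \<Rightarrow> real" where
  "Profit m c D p sel = measure_pmf.expectation D (\<lambda>v. p (sel v) - (\<Sum>j<m. c j * sel v j))"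

definition SProfit :: "nat \<Rightarrow> (nat \<Rightarrow> real) \<Rightarrow> valuation pmf \<Rightarrow> real" where
  "SProfit m c D = Sup {Profit m c D (item_pricing m q) sel | q sel.
      (\<forall>j<m. 0 \<le> q j) \<and> valid_choice m (item_pricing m q) D sel}"

definition BuyManyProfit :: "nat \<Rightarrow> (nat \<Rightarrow> real) \<Rightarrow> valuation pmf \<Rightarrow> real" where
  "BuyManyProfit m c D = Sup {Profit m c D p sel | p sel.
      buy_many m p \<and> valid_choice m p D sel}"

end

theory Submission
  imports Defs
begin

text \<open>Let u_j = 2^j / (2^m - 1) for the items j < m, so that the u_j sum to 1. Buyer type t,
drawn with probability proportional to 2^-t, values item t at 0 and every other item at
V_t = 1 / (1 - u_t); every item costs 1.

The pricing p(l) = max_j l_j / u_j is buy-many. If W is the best utility of a single lottery,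
the item prices a_j = (v_j - W)^+ satisfy sum_j a_j u_j <= 1 (otherwise the lottery
proportional to u on the items worth more than W would beat W), so p dominates the item
pricing a, and under such prices no adaptive strategy can raise max(v(S), W) by more than it
pays. Type t buys the lottery proportional to u off item t at price V_t, so it yields the profit
V_t - 1 >= u_t, and Pr[t] u_t = K := 2^(m-1) / (2^m - 1)^2 does not depend on t: the buy-many
profit is at least m K.

Under an item pricing whose cheapest price is q, a type t other than the cheapest item yields a
positive profit only if V_t >= q, and then at most q - 1, since it could buy the cheapest item
alone instead. As V_t - 1 <= 4 u_t, these types have total probability at most 8 K / (q - 1),
and the type of the cheapest item yields at most 4 K: every item pricing earns at most 12 K.\<close>

section \<open>Ratio pricings are buy-many\<close>

lemma zero_in_lotteries: "(\<lambda>_. 0) \<in> lotteries m"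
  by (simp add: lotteries_def)

definition unit_lottery :: "nat \<Rightarrow> lottery" where
  "unit_lottery i = (\<lambda>j. if j = i then 1 else 0)"

lemma unit_lottery_in_lotteries: "i < m \<Longrightarrow> unit_lottery i \<in> lotteries m"
  by (auto simp: lotteries_def unit_lottery_def)

lemma sum_mult_unit_lottery: "i < m \<Longrightarrow> (\<Sum>j<m. f j * unit_lottery i j) = (f i :: real)"
  by (simp add: unit_lottery_def if_distrib cong: if_cong)

lemma setval_insert_le:
  assumes "finite S"
  shows "setval v (insert j S) \<le> max (setval v S) (v j)"
  using assms by (cases "S = {}") (simp_all add: setval_def)

text \<open>Buying item j raises max (setval v S) W by at most a j, and every lottery costs at least
its expected item price under a.\<close>
lemma strat_util_le_max_setval:
  assumes a_nonneg: "\<forall>j<m. 0 \<le> a j" and surplus: "\<forall>j<m. v j - a j \<le> W"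
    and dominated: "\<forall>l\<in>lotteries m. (\<Sum>j<m. a j * l j) \<le> p l"
  shows "valid_strategy m s \<Longrightarrow> finite S \<Longrightarrow> strat_util m v p s S \<le> max (setval v S) W"
proof (induction s arbitrary: S)
  case Stop
  then show ?case by simp
next
  case (Buy l k)
  define M where "M = max (setval v S) W"
  from Buy.prems have l: "l \<in> lotteries m" and valid: "\<And>r. valid_strategy m (k r)" by auto
  from l have l_nonneg: "\<And>j. 0 \<le> l j" and l_sum: "(\<Sum>j<m. l j) \<le> 1"
    by (auto simp: lotteries_def)
  have IH: "\<And>r S'. finite S' \<Longrightarrow> strat_util m v p (k r) S' \<le> max (setval v S') W"
    using Buy.IH valid by auto
  have won: "strat_util m v p (k (Some j)) (insert j S) \<le> M + a j" if "j < m" for j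
  proof -
    have "strat_util m v p (k (Some j)) (insert j S) \<le> max (setval v (insert j S)) W"
      using IH Buy.prems by auto
    also have "\<dots> \<le> M + a j"
      using setval_insert_le[OF \<open>finite S\<close>, of v j] a_nonneg surplus that unfolding M_def
      by force
    finally show ?thesis .
  qed
  have lost: "strat_util m v p (k None) S \<le> M"
    using IH Buy.prems unfolding M_def by auto
  have "(\<Sum>j<m. l j * strat_util m v p (k (Some j)) (insert j S)) \<le> (\<Sum>j<m. l j * (M + a j))"
    by (rule sum_mono) (use won l_nonneg in \<open>auto intro: mult_left_mono\<close>)
  also have "\<dots> = (\<Sum>j<m. l j) * M + (\<Sum>j<m. a j * l j)"
    by (simp add: algebra_simps sum.distrib sum_distrib_left)
  finally have "(\<Sum>j<m. l j * strat_util m v p (k (Some j)) (insert j S))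
      \<le> (\<Sum>j<m. l j) * M + (\<Sum>j<m. a j * l j)" .
  moreover have "(1 - (\<Sum>j<m. l j)) * strat_util m v p (k None) S \<le> (1 - (\<Sum>j<m. l j)) * M"
    using lost l_sum by (intro mult_left_mono) auto
  moreover have "(\<Sum>j<m. a j * l j) \<le> p l"
    using dominated l by auto
  ultimately show ?case
    unfolding M_def by (simp add: algebra_simps)
qed

definition ratio_pricing :: "nat \<Rightarrow> (nat \<Rightarrow> real) \<Rightarrow> pricing" where
  "ratio_pricing m u l = Max ((\<lambda>j. l j / u j) ` {..<m})"

lemma ratio_pricing_ge: "j < m \<Longrightarrow> l j / u j \<le> ratio_pricing m u l"
  unfolding ratio_pricing_def by (rule Max_ge) auto

lemma ratio_pricing_le: "0 < m \<Longrightarrow> (\<And>j. j < m \<Longrightarrow> l j / u j \<le> B) \<Longrightarrow> ratio_pricing m u l \<le> B"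
  unfolding ratio_pricing_def by (subst Max_le_iff) auto

lemma ratio_pricing_nonneg:
  assumes "0 < m" "\<forall>j<m. 0 < u j" "l \<in> lotteries m"
  shows "0 \<le> ratio_pricing m u l"
proof -
  have "0 \<le> l 0 / u 0"
    using assms by (auto simp: lotteries_def)
  then show ?thesis
    using ratio_pricing_ge[of 0 m l u] \<open>0 < m\<close> by linarith
qed

lemma lval_le_ratio_pricing:
  assumes u_pos: "\<forall>j<m. 0 < u j" and v_nonneg: "\<forall>j<m. 0 \<le> v j"
  shows "lval m v l \<le> (\<Sum>j<m. v j * u j) * ratio_pricing m u l"
proof -
  have "lval m v l \<le> (\<Sum>j<m. v j * (u j * ratio_pricing m u l))"
    unfolding lval_def
  proof (rule sum_mono)
    fix j assume "j \<in> {..<m}"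
    then have "l j \<le> u j * ratio_pricing m u l"
      using ratio_pricing_ge[of j m l u] u_pos by (auto simp: divide_le_eq mult.commute)
    then show "v j * l j \<le> v j * (u j * ratio_pricing m u l)"
      using v_nonneg \<open>j \<in> {..<m}\<close> by (auto intro: mult_left_mono)
  qed
  then show ?thesis
    by (simp add: sum_distrib_right mult.assoc)
qed

definition proportional_lottery :: "nat set \<Rightarrow> (nat \<Rightarrow> real) \<Rightarrow> lottery" where
  "proportional_lottery J u = (\<lambda>j. if j \<in> J then u j / (\<Sum>i\<in>J. u i) else 0)"

context
  fixes m :: nat and J :: "nat set" and u :: "nat \<Rightarrow> real"
  assumes J_sub: "J \<subseteq> {..<m}" and J_ne: "J \<noteq> {}" and u_pos: "\<forall>j\<in>J. 0 < u j"
begin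

lemma proportional_weight_pos: "0 < (\<Sum>j\<in>J. u j)"
  using J_sub J_ne u_pos by (intro sum_pos) (auto intro: finite_subset)

lemma sum_mult_proportional_lottery:
  "(\<Sum>j<m. f j * proportional_lottery J u j) = (\<Sum>j\<in>J. f j * u j) / (\<Sum>j\<in>J. u j)"
proof -
  have "(\<Sum>j<m. f j * proportional_lottery J u j) = (\<Sum>j\<in>{..<m} \<inter> J. f j * (u j / (\<Sum>i\<in>J. u i)))"
    by (simp add: proportional_lottery_def sum.inter_restrict if_distrib cong: if_cong)
  also have "\<dots> = (\<Sum>j\<in>J. f j * u j) / (\<Sum>j\<in>J. u j)"
    using J_sub by (simp add: Int_absorb1 sum_divide_distrib)
  finally show ?thesis .
qed

lemma sum_proportional_lottery: "(\<Sum>j<m. proportional_lottery J u j) = 1"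
  using sum_mult_proportional_lottery[of "\<lambda>_. 1"] proportional_weight_pos by simp

lemma proportional_lottery_in_lotteries: "proportional_lottery J u \<in> lotteries m"
proof -
  have "u j \<le> (\<Sum>i\<in>J. u i)" if "j \<in> J" for j
    using J_sub u_pos that by (intro member_le_sum) (auto intro: finite_subset less_imp_le)
  then show ?thesis
    using J_sub u_pos proportional_weight_pos sum_proportional_lottery
    by (auto simp: lotteries_def proportional_lottery_def less_imp_le)
qed

lemma lval_proportional_lottery:
  "lval m v (proportional_lottery J u) = (\<Sum>j\<in>J. v j * u j) / (\<Sum>j\<in>J. u j)"
  unfolding lval_def by (rule sum_mult_proportional_lottery)

lemma ratio_pricing_proportional_lottery:
  "ratio_pricing m u (proportional_lottery J u) = 1 / (\<Sum>j\<in>J. u j)"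
proof (rule antisym)
  obtain i where "i \<in> J" and "0 < u i"
    using J_ne u_pos by blast
  show "ratio_pricing m u (proportional_lottery J u) \<le> 1 / (\<Sum>j\<in>J. u j)"
    using \<open>i \<in> J\<close> J_sub u_pos proportional_weight_pos
    by (intro ratio_pricing_le) (auto simp: proportional_lottery_def)
  have "proportional_lottery J u i / u i = 1 / (\<Sum>j\<in>J. u j)"
    using \<open>i \<in> J\<close> \<open>0 < u i\<close> by (simp add: proportional_lottery_def)
  moreover have "i < m"
    using \<open>i \<in> J\<close> J_sub by auto
  ultimately show "1 / (\<Sum>j\<in>J. u j) \<le> ratio_pricing m u (proportional_lottery J u)"
    using ratio_pricing_ge[of i m "proportional_lottery J u" u] by simp
qed

end

text \<open>Otherwise the lottery proportional to u on the items worth more than W beats W.\<close>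
lemma excess_value_weight_le_one:
  assumes u_pos: "\<forall>j<m. 0 < u j"
    and W: "\<And>l. l \<in> lotteries m \<Longrightarrow> lval m v l - ratio_pricing m u l \<le> W"
  shows "(\<Sum>j<m. max (v j - W) 0 * u j) \<le> 1"
proof (rule ccontr)
  define J where "J = {j\<in>{..<m}. W < v j}"
  assume "\<not> ?thesis"
  moreover have "(\<Sum>j<m. max (v j - W) 0 * u j) = (\<Sum>j\<in>J. (v j - W) * u j)"
    unfolding J_def by (subst sum.inter_filter) (auto intro!: sum.cong)
  ultimately have excess: "1 < (\<Sum>j\<in>J. v j * u j) - W * (\<Sum>j\<in>J. u j)"
    by (simp add: algebra_simps sum_subtractf sum_distrib_left)
  have "J \<noteq> {}"
    using excess by (intro notI) simp
  then have J: "J \<subseteq> {..<m}" "J \<noteq> {}" "\<forall>j\<in>J. 0 < u j"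
    using u_pos by (auto simp: J_def)
  have "W < ((\<Sum>j\<in>J. v j * u j) - 1) / (\<Sum>j\<in>J. u j)"
    using excess proportional_weight_pos[OF J] by (simp add: field_simps)
  also have "\<dots> = lval m v (proportional_lottery J u) - ratio_pricing m u (proportional_lottery J u)"
    by (simp add: lval_proportional_lottery[OF J] ratio_pricing_proportional_lottery[OF J] diff_divide_distrib)
  finally have "W < lval m v (proportional_lottery J u) - ratio_pricing m u (proportional_lottery J u)" .
  then show False
    using W[OF proportional_lottery_in_lotteries[OF J]] by linarith
qed

lemma ratio_pricing_buy_many:
  assumes "0 < m" and u_pos: "\<forall>j<m. 0 < u j"
  shows "buy_many m (ratio_pricing m u)"
  unfolding buy_many_def
proof (intro conjI allI impI)
  show "pricing_fn m (ratio_pricing m u)"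
    unfolding pricing_fn_def using ratio_pricing_nonneg[OF assms] by auto
  fix v s assume "unit_demand m v \<and> valid_strategy m s"
  then have v_nonneg: "\<forall>j<m. 0 \<le> v j" and s: "valid_strategy m s"
    by (auto simp: unit_demand_def)
  define W where "W = (SUP l\<in>lotteries m. lval m v l - ratio_pricing m u l)"
  have "bdd_above ((\<lambda>l. lval m v l - ratio_pricing m u l) ` lotteries m)"
  proof (rule bdd_aboveI2)
    fix l assume l: "l \<in> lotteries m"
    have "lval m v l \<le> (\<Sum>j<m. v j)"
      unfolding lval_def
      by (rule sum_mono) (use l v_nonneg in \<open>auto simp: lotteries_def intro: mult_left_le\<close>)
    then show "lval m v l - ratio_pricing m u l \<le> (\<Sum>j<m. v j)"
      using ratio_pricing_nonneg[OF assms l] by linarith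
  qed
  then have W_ge: "lval m v l - ratio_pricing m u l \<le> W" if "l \<in> lotteries m" for l
    unfolding W_def using that by (rule cSUP_upper2) simp
  have "ratio_pricing m u (\<lambda>_. 0) \<le> 0"
    by (rule ratio_pricing_le[OF \<open>0 < m\<close>]) simp
  then have "0 \<le> W"
    using W_ge[OF zero_in_lotteries] by (simp add: lval_def)
  define a where "a j = max (v j - W) 0" for j
  have "strat_util m v (ratio_pricing m u) s {} \<le> max (setval v {}) W"
  proof (rule strat_util_le_max_setval[OF _ _ _ s])
    show "\<forall>l\<in>lotteries m. (\<Sum>j<m. a j * l j) \<le> ratio_pricing m u l"
    proof
      fix l assume l: "l \<in> lotteries m"
      have "(\<Sum>j<m. a j * l j) \<le> (\<Sum>j<m. a j * u j) * ratio_pricing m u l"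
        using lval_le_ratio_pricing[OF u_pos, of a] by (simp add: a_def lval_def)
      also have "\<dots> \<le> ratio_pricing m u l"
        using excess_value_weight_le_one[OF u_pos W_ge] ratio_pricing_nonneg[OF assms l] u_pos
        by (intro mult_left_le_one_le sum_nonneg mult_nonneg_nonneg) (auto simp: a_def less_imp_le)
      finally show "(\<Sum>j<m. a j * l j) \<le> ratio_pricing m u l" .
    qed
  qed (use \<open>0 \<le> W\<close> in \<open>auto simp: a_def\<close>)
  then show "strat_util m v (ratio_pricing m u) s {} \<le> (SUP l\<in>lotteries m. lval m v l - ratio_pricing m u l)"
    using \<open>0 \<le> W\<close> by (simp add: setval_def W_def)
qed

lemma buy_many_price_le_lval:
  assumes "buy_many m p" and "unit_demand m v" and opt: "l \<in> optimal m p v"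
  shows "p l \<le> lval m v l"
proof -
  have "strat_util m v p Stop {} \<le> (SUP l\<in>lotteries m. lval m v l - p l)"
    using assms(1,2) valid_strategy.simps(1) unfolding buy_many_def by blast
  also have "\<dots> \<le> lval m v l - p l"
    using opt zero_in_lotteries[of m] unfolding optimal_def by (intro cSUP_least) auto
  finally show ?thesis
    by (simp add: setval_def)
qed

section \<open>Item pricings and all-but-one valuations\<close>

lemma lval_minus_item_pricing:
  "lval m v l - item_pricing m q l = (\<Sum>j<m. (v j - q j) * l j)"
  unfolding lval_def item_pricing_def by (simp add: algebra_simps sum_subtractf)

lemma optimal_item_pricing_utility_ge:
  assumes opt: "l \<in> optimal m (item_pricing m q) v" and "l' \<in> lotteries m"
  shows "(\<Sum>j<m. (v j - q j) * l' j) \<le> (\<Sum>j<m. (v j - q j) * l j)"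
  using assms unfolding optimal_def by (auto simp: lval_minus_item_pricing[symmetric])

lemma optimal_item_pricing_utility_nonneg:
  assumes "l \<in> optimal m (item_pricing m q) v"
  shows "0 \<le> (\<Sum>j<m. (v j - q j) * l j)"
  using optimal_item_pricing_utility_ge[OF assms zero_in_lotteries] by simp

lemma optimal_item_pricing_vanishes:
  assumes opt: "l \<in> optimal m (item_pricing m q) v" and le: "\<forall>j<m. v j \<le> q j"
    and "i < m" "v i < q i"
  shows "l i = 0"
proof -
  have l_nonneg: "\<And>j. 0 \<le> l j"
    using opt by (simp add: optimal_def lotteries_def)
  have "(\<Sum>j<m. (q j - v j) * l j) = - (\<Sum>j<m. (v j - q j) * l j)"
    by (simp add: algebra_simps sum_negf[symmetric])
  also have "\<dots> \<le> 0"
    using optimal_item_pricing_utility_nonneg[OF opt] by simp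
  finally have "(\<Sum>j<m. (q j - v j) * l j) = 0"
    using le l_nonneg by (intro antisym sum_nonneg) auto
  then have "(q i - v i) * l i = 0"
    using le l_nonneg \<open>i < m\<close> by (subst (asm) sum_nonneg_eq_0_iff) auto
  then show ?thesis
    using \<open>v i < q i\<close> by simp
qed

lemma item_pricing_profit_eq:
  "item_pricing m q l - (\<Sum>j<m. l j)
     = (\<Sum>j<m. (v j - 1) * l j) - (\<Sum>j<m. (v j - q j) * l j)"
  unfolding item_pricing_def by (simp add: algebra_simps sum_subtractf)

definition all_but_one :: "nat \<Rightarrow> real \<Rightarrow> nat \<Rightarrow> valuation" where
  "all_but_one m V t = (\<lambda>j. if j < m \<and> j \<noteq> t then V else 0)"

lemma sum_all_but_one:
  assumes "t < m"
  shows "(\<Sum>j<m. all_but_one m V t j * f j) = V * (\<Sum>j\<in>{..<m} - {t}. f j)"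
proof -
  have "(\<Sum>j<m. all_but_one m V t j * f j) = (\<Sum>j\<in>{..<m} - {t}. all_but_one m V t j * f j)"
    using assms by (simp add: sum.remove[of "{..<m}" t] all_but_one_def)
  also have "\<dots> = V * (\<Sum>j\<in>{..<m} - {t}. f j)"
    by (simp add: all_but_one_def sum_distrib_left)
  finally show ?thesis .
qed

lemma unit_demand_all_but_one: "0 \<le> V \<Longrightarrow> unit_demand m (all_but_one m V t)"
  by (simp add: unit_demand_def all_but_one_def)

lemma all_but_one_surplus_le:
  assumes "1 \<le> V" and l: "l \<in> lotteries m"
  shows "(\<Sum>j<m. (all_but_one m V t j - 1) * l j) \<le> V - 1"
proof -
  have "(\<Sum>j<m. (all_but_one m V t j - 1) * l j) \<le> (\<Sum>j<m. (V - 1) * l j)"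
    by (intro sum_mono mult_right_mono) (use l \<open>1 \<le> V\<close> in \<open>auto simp: all_but_one_def lotteries_def\<close>)
  also have "\<dots> \<le> V - 1"
    using l \<open>1 \<le> V\<close> by (simp add: sum_distrib_left[symmetric] lotteries_def mult_left_le)
  finally show ?thesis .
qed

text \<open>The buyer could have bought item i alone, at utility V - q i.\<close>
lemma all_but_one_item_profit_le:
  assumes "1 \<le> V" and opt: "l \<in> optimal m (item_pricing m q) (all_but_one m V t)"
  shows "item_pricing m q l - (\<Sum>j<m. l j) \<le> V - 1"
    and "i < m \<Longrightarrow> i \<noteq> t \<Longrightarrow> item_pricing m q l - (\<Sum>j<m. l j) \<le> q i - 1"
proof -
  have l: "l \<in> lotteries m"
    using opt by (simp add: optimal_def)
  show "item_pricing m q l - (\<Sum>j<m. l j) \<le> V - 1"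
    using all_but_one_surplus_le[OF \<open>1 \<le> V\<close> l, of t] optimal_item_pricing_utility_nonneg[OF opt]
    by (simp add: item_pricing_profit_eq[of m q l "all_but_one m V t"])
  assume "i < m" "i \<noteq> t"
  then have "V - q i \<le> (\<Sum>j<m. (all_but_one m V t j - q j) * l j)"
    using optimal_item_pricing_utility_ge[OF opt unit_lottery_in_lotteries[OF \<open>i < m\<close>]]
    by (simp add: sum_mult_unit_lottery all_but_one_def)
  then show "item_pricing m q l - (\<Sum>j<m. l j) \<le> q i - 1"
    using all_but_one_surplus_le[OF \<open>1 \<le> V\<close> l, of t]
    by (simp add: item_pricing_profit_eq[of m q l "all_but_one m V t"])
qed

lemma all_but_one_item_profit_nonpos:
  assumes q_nonneg: "\<forall>j<m. 0 \<le> q j" and overpriced: "\<forall>j<m. j \<noteq> t \<longrightarrow> V < q j"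
    and opt: "l \<in> optimal m (item_pricing m q) (all_but_one m V t)"
  shows "item_pricing m q l - (\<Sum>j<m. l j) \<le> 0"
proof -
  have "l j = 0" if "j < m" "j \<noteq> t" for j
    using optimal_item_pricing_vanishes[OF opt] q_nonneg overpriced that
    by (auto simp: all_but_one_def less_imp_le)
  moreover have "0 \<le> l j" for j
    using opt by (simp add: optimal_def lotteries_def)
  ultimately have "(\<Sum>j<m. (all_but_one m V t j - 1) * l j) \<le> 0"
    by (intro sum_nonpos) (auto simp: all_but_one_def)
  then show ?thesis
    using optimal_item_pricing_utility_nonneg[OF opt]
    by (simp add: item_pricing_profit_eq[of m q l "all_but_one m V t"])
qed

lemma all_but_one_item_profit_le_cheapest:
  assumes "1 \<le> V" and q_nonneg: "\<forall>j<m. 0 \<le> q j"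
    and cheapest: "i < m" "i \<noteq> t" "\<forall>j<m. q i \<le> q j"
    and opt: "l \<in> optimal m (item_pricing m q) (all_but_one m V t)"
  shows "item_pricing m q l - (\<Sum>j<m. l j) \<le> (if q i \<le> V then max (q i - 1) 0 else 0)"
proof (cases "q i \<le> V")
  case True
  then show ?thesis
    using all_but_one_item_profit_le(2)[OF \<open>1 \<le> V\<close> opt cheapest(1,2)] by simp
next
  case False
  then have "\<forall>j<m. j \<noteq> t \<longrightarrow> V < q j"
    using cheapest(3) by force
  then show ?thesis
    using all_but_one_item_profit_nonpos[OF q_nonneg _ opt] False by simp
qed

lemma unit_lottery_optimal_all_but_one:
  assumes "0 \<le> P" "P \<le> V" "i < m" "i \<noteq> t"
  shows "unit_lottery i \<in> optimal m (item_pricing m (\<lambda>_. P)) (all_but_one m V t)"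
  unfolding optimal_def
proof (intro CollectI conjI ballI)
  show "unit_lottery i \<in> lotteries m"
    using \<open>i < m\<close> by (rule unit_lottery_in_lotteries)
  fix l assume l: "l \<in> lotteries m"
  have "lval m (all_but_one m V t) l - item_pricing m (\<lambda>_. P) l
      = (\<Sum>j<m. (all_but_one m V t j - P) * l j)"
    by (rule lval_minus_item_pricing)
  also have "\<dots> \<le> (\<Sum>j<m. (V - P) * l j)"
    by (intro sum_mono mult_right_mono) (use l assms in \<open>auto simp: all_but_one_def lotteries_def\<close>)
  also have "\<dots> \<le> V - P"
    using l assms by (simp add: sum_distrib_left[symmetric] lotteries_def mult_left_le)
  also have "\<dots> = lval m (all_but_one m V t) (unit_lottery i) - item_pricing m (\<lambda>_. P) (unit_lottery i)"
    using assms by (simp add: lval_minus_item_pricing sum_mult_unit_lottery all_but_one_def)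
  finally show "lval m (all_but_one m V t) l - item_pricing m (\<lambda>_. P) l
      \<le> lval m (all_but_one m V t) (unit_lottery i) - item_pricing m (\<lambda>_. P) (unit_lottery i)" .
qed

lemma sum_half_power_le:
  fixes x :: real
  assumes "0 < x" and "finite A" and large: "\<forall>t\<in>A. x \<le> 2 ^ t"
  shows "(\<Sum>t\<in>A. (1/2::real) ^ t) \<le> 2 / x"
proof (cases "A = {}")
  case True
  then show ?thesis using \<open>0 < x\<close> by simp
next
  case False
  define k where "k = Min A"
  have "k \<in> A"
    unfolding k_def using \<open>finite A\<close> False by simp
  have geometric: "(\<Sum>t\<in>{k..<n}. (1/2::real) ^ t) = 2 * (1/2)^k - 2 * (1/2)^n" if "k \<le> n" for n
    using that by (induction n rule: nat_induct_at_least) (simp_all add: sum.atLeastLessThan_Suc)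
  have "(\<Sum>t\<in>A. (1/2::real) ^ t) \<le> (\<Sum>t\<in>{k..<Suc (Max A)}. (1/2::real) ^ t)"
    by (rule sum_mono2) (use \<open>finite A\<close> in \<open>auto simp: k_def less_Suc_eq_le\<close>)
  also have "\<dots> \<le> 2 * (1/2)^k"
    using geometric[of "Suc (Max A)"] \<open>k \<in> A\<close> \<open>finite A\<close> by (simp add: le_SucI)
  also have "\<dots> \<le> 2 / x"
    using large \<open>k \<in> A\<close> \<open>0 < x\<close> by (simp add: power_one_over field_simps)
  finally show ?thesis .
qed

section \<open>A distribution with a linear gap\<close>

definition share_denom :: "nat \<Rightarrow> real" where
  "share_denom m = 2 ^ m - 1"

definition share :: "nat \<Rightarrow> nat \<Rightarrow> real" where
  "share m j = 2 ^ j / share_denom m"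

definition type_value :: "nat \<Rightarrow> nat \<Rightarrow> real" where
  "type_value m t = 1 / (1 - share m t)"

definition type_valuation :: "nat \<Rightarrow> nat \<Rightarrow> valuation" where
  "type_valuation m t = all_but_one m (type_value m t) t"

definition type_weight :: "nat \<Rightarrow> nat \<Rightarrow> real" where
  "type_weight m t = (if t < m then 2 ^ (m - 1) / share_denom m * (1/2) ^ t else 0)"

definition weighted_share :: "nat \<Rightarrow> real" where
  "weighted_share m = 2 ^ (m - 1) / (share_denom m)\<^sup>2"

definition type_pmf :: "nat \<Rightarrow> nat pmf" where
  "type_pmf m = embed_pmf (type_weight m)"

definition valuation_pmf :: "nat \<Rightarrow> valuation pmf" where
  "valuation_pmf m = map_pmf (type_valuation m) (type_pmf m)"

definition share_lottery :: "nat \<Rightarrow> nat \<Rightarrow> lottery" where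
  "share_lottery m t = proportional_lottery ({..<m} - {t}) (share m)"

definition share_lottery_choice :: "nat \<Rightarrow> valuation \<Rightarrow> lottery" where
  "share_lottery_choice m v = share_lottery m (SOME t. t < m \<and> type_valuation m t = v)"

text \<open>Under the uniform item price type_value m 0, every type buys item 0, or item 1 if it is type 0.\<close>
definition cheap_item_choice :: "valuation \<Rightarrow> lottery" where
  "cheap_item_choice v = unit_lottery (if v 0 = 0 then 1 else 0)"

context
  fixes m :: nat
  assumes two_le_m: "2 \<le> m"
begin

lemma share_denom_pos: "0 < share_denom m"
proof -
  have "(2::real) ^ 1 < 2 ^ m"
    using two_le_m by (intro power_strict_increasing) auto
  then show ?thesis by (simp add: share_denom_def)
qed

lemma share_pos: "0 < share m j"
  using share_denom_pos by (simp add: share_def)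

lemma sum_share: "(\<Sum>j<m. share m j) = 1"
  using share_denom_pos by (simp add: share_def sum_divide_distrib[symmetric] geometric_sum share_denom_def)

lemma sum_share_except: "t < m \<Longrightarrow> (\<Sum>j\<in>{..<m} - {t}. share m j) = 1 - share m t"
  using sum_share by (simp add: sum_diff1)

lemma share_lottery_support:
  "{..<m} - {t} \<subseteq> {..<m}" "{..<m} - {t} \<noteq> {}" "\<forall>j\<in>{..<m} - {t}. 0 < share m j"
proof -
  have "(if t = 0 then 1 else 0) \<in> {..<m} - {t}"
    using two_le_m by auto
  then show "{..<m} - {t} \<noteq> {}"
    by blast
qed (auto simp: share_pos)

lemma share_le_three_quarters: assumes "t < m" shows "share m t \<le> 3/4"
proof -
  obtain k where k: "m = Suc k" and "1 \<le> k"
    using two_le_m by (cases m) auto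
  have "(2::real) ^ t \<le> 2 ^ k"
    using assms k by (intro power_increasing) auto
  moreover have "(2::real) \<le> 2 ^ k"
    using power_increasing[of 1 k "2::real"] \<open>1 \<le> k\<close> by simp
  moreover have "(2::real) ^ m = 2 * 2 ^ k"
    using k by simp
  ultimately have "4 * 2 ^ t \<le> 3 * ((2::real) ^ m - 1)"
    by (smt (verit))
  then show ?thesis
    using share_denom_pos by (simp add: share_def share_denom_def field_simps)
qed

lemma one_minus_share_pos: "t < m \<Longrightarrow> 0 < 1 - share m t"
  using share_le_three_quarters[of t] by simp

lemma type_value_ge_one: "t < m \<Longrightarrow> 1 \<le> type_value m t"
  using one_minus_share_pos[of t] share_pos[of t] by (simp add: type_value_def field_simps)

lemma type_value_pos: "t < m \<Longrightarrow> 0 < type_value m t"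
  using type_value_ge_one by (simp add: less_le_trans[OF zero_less_one])

lemma type_value_minus_one: "t < m \<Longrightarrow> type_value m t - 1 = share m t / (1 - share m t)"
  using one_minus_share_pos[of t] by (simp add: type_value_def field_simps)

lemma share_le_type_value_minus_one: "t < m \<Longrightarrow> share m t \<le> type_value m t - 1"
  using one_minus_share_pos[of t] share_pos[of t]
  by (simp add: type_value_minus_one le_divide_eq mult_left_le)

lemma type_value_minus_one_le: "t < m \<Longrightarrow> type_value m t - 1 \<le> 4 * share m t"
  using share_le_three_quarters[of t] share_pos[of t]
  by (simp add: type_value_minus_one divide_le_eq field_simps)

lemma type_value_0_le:
  assumes "t < m"
  shows "type_value m 0 \<le> type_value m t"
proof -
  have "share m 0 \<le> share m t"
    using share_denom_pos by (simp add: share_def divide_right_mono)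
  then show ?thesis
    unfolding type_value_def using one_minus_share_pos[OF \<open>t < m\<close>] by (intro frac_le) auto
qed

lemma type_weight_nonneg: "0 \<le> type_weight m t"
  using share_denom_pos by (simp add: type_weight_def)

lemma type_weight_mult_share: "t < m \<Longrightarrow> type_weight m t * share m t = weighted_share m"
  using share_denom_pos
  by (simp add: type_weight_def share_def weighted_share_def power_one_over power2_eq_square field_simps)

lemma weighted_share_pos: "0 < weighted_share m"
  using share_denom_pos by (simp add: weighted_share_def)

lemma sum_type_weight: "(\<Sum>t<m. type_weight m t) = 1"
proof -
  obtain k where k: "m = Suc k"
    using two_le_m by (cases m) auto
  have "(\<Sum>t<m. type_weight m t) = (\<Sum>t<m. 2 ^ (m - 1) / share_denom m * (1/2::real) ^ t)"
    by (simp add: type_weight_def)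
  also have "\<dots> = 2 ^ (m - 1) / share_denom m * (\<Sum>t<m. (1/2::real) ^ t)"
    by (simp only: sum_distrib_left)
  also have "(\<Sum>t<m. (1/2::real) ^ t) = ((1/2) ^ m - 1) / (1/2 - 1)"
    by (rule geometric_sum) simp
  also have "((1/2::real) ^ m - 1) / (1/2 - 1) = 2 * (1 - (1/2) ^ m)"
    by (simp add: field_simps)
  also have "2 ^ (m - 1) / share_denom m * (2 * (1 - (1/2::real) ^ m)) = 1"
    using share_denom_pos by (simp add: k share_denom_def field_simps)
  finally show ?thesis .
qed

lemma nn_integral_type_weight: "(\<integral>\<^sup>+t. ennreal (type_weight m t) \<partial>count_space UNIV) = 1"
proof -
  have "(\<integral>\<^sup>+t. ennreal (type_weight m t) \<partial>count_space UNIV) = (\<Sum>t<m. ennreal (type_weight m t))"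
    by (rule nn_integral_count_space') (auto simp: type_weight_def)
  also have "\<dots> = ennreal (\<Sum>t<m. type_weight m t)"
    using type_weight_nonneg by simp
  finally show ?thesis
    using sum_type_weight by simp
qed

lemma pmf_type_pmf: "pmf (type_pmf m) t = type_weight m t"
  unfolding type_pmf_def by (rule pmf_embed_pmf[OF type_weight_nonneg nn_integral_type_weight])

lemma set_type_pmf: "set_pmf (type_pmf m) = {..<m}"
  unfolding type_pmf_def using share_denom_pos
  by (subst set_embed_pmf[OF type_weight_nonneg nn_integral_type_weight]) (auto simp: type_weight_def)

lemma set_valuation_pmf: "set_pmf (valuation_pmf m) = type_valuation m ` {..<m}"
  by (simp add: valuation_pmf_def set_type_pmf)

lemma Profit_valuation_pmf:
  "Profit m (\<lambda>_. 1) (valuation_pmf m) p sel =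
     (\<Sum>t<m. type_weight m t * (p (sel (type_valuation m t)) - (\<Sum>j<m. sel (type_valuation m t) j)))"
  unfolding Profit_def valuation_pmf_def
  by (simp, subst integral_measure_pmf_real[of "{..<m}"])
    (auto simp: set_type_pmf pmf_type_pmf mult.commute)

lemma unit_demand_type_valuation: "t < m \<Longrightarrow> unit_demand m (type_valuation m t)"
  using type_value_pos by (simp add: type_valuation_def unit_demand_all_but_one less_imp_le)

lemma type_valuation_inj: "s < m \<Longrightarrow> t < m \<Longrightarrow> type_valuation m s = type_valuation m t \<Longrightarrow> s = t"
  using type_value_pos[of t] by (metis all_but_one_def type_valuation_def less_irrefl)

lemma share_lottery_choice_type: "t < m \<Longrightarrow> share_lottery_choice m (type_valuation m t) = share_lottery m t"
  unfolding share_lottery_choice_def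
  by (rule arg_cong[where f = "share_lottery m"], rule some_equality) (auto dest: type_valuation_inj)

lemma sum_share_lottery: "(\<Sum>j<m. share_lottery m t j) = 1"
  unfolding share_lottery_def by (rule sum_proportional_lottery[OF share_lottery_support])

lemma share_lottery_in_lotteries: "share_lottery m t \<in> lotteries m"
  unfolding share_lottery_def by (rule proportional_lottery_in_lotteries[OF share_lottery_support])

lemma ratio_pricing_share_lottery:
  "t < m \<Longrightarrow> ratio_pricing m (share m) (share_lottery m t) = type_value m t"
  unfolding share_lottery_def
  by (simp add: ratio_pricing_proportional_lottery[OF share_lottery_support] sum_share_except type_value_def)

lemma lval_share_lottery:
  assumes "t < m"
  shows "lval m (type_valuation m t) (share_lottery m t) = type_value m t"
proof -
  have "(\<Sum>j\<in>{..<m} - {t}. share_lottery m t j) = (\<Sum>j<m. share_lottery m t j)"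
    using assms by (simp add: sum.remove[of "{..<m}" t] share_lottery_def proportional_lottery_def)
  then show ?thesis
    by (simp add: lval_def type_valuation_def sum_all_but_one[OF assms] sum_share_lottery)
qed

text \<open>Type t values the share vector at exactly 1, so no lottery gives it positive utility.\<close>
lemma share_lottery_optimal:
  assumes "t < m"
  shows "share_lottery m t \<in> optimal m (ratio_pricing m (share m)) (type_valuation m t)"
  unfolding optimal_def
proof (intro CollectI conjI ballI)
  show "share_lottery m t \<in> lotteries m"
    by (rule share_lottery_in_lotteries)
  have "(\<Sum>j<m. type_valuation m t j * share m j) = 1"
    using one_minus_share_pos[OF assms]
    by (simp add: type_valuation_def sum_all_but_one[OF assms] sum_share_except[OF assms] type_value_def)
  moreover fix l
  have "lval m (type_valuation m t) l \<le> (\<Sum>j<m. type_valuation m t j * share m j) * ratio_pricing m (share m) l"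
    using share_pos unit_demand_type_valuation[OF assms]
    by (intro lval_le_ratio_pricing) (auto simp: unit_demand_def)
  ultimately show "lval m (type_valuation m t) l - ratio_pricing m (share m) l
      \<le> lval m (type_valuation m t) (share_lottery m t) - ratio_pricing m (share m) (share_lottery m t)"
    using lval_share_lottery[OF assms] ratio_pricing_share_lottery[OF assms] by simp
qed

lemma buy_many_Profit_le:
  assumes "buy_many m p" and "valid_choice m p (valuation_pmf m) sel"
  shows "Profit m (\<lambda>_. 1) (valuation_pmf m) p sel \<le> (\<Sum>t<m. type_weight m t * (\<Sum>j<m. type_valuation m t j))"
  unfolding Profit_valuation_pmf
proof (intro sum_mono mult_left_mono type_weight_nonneg)
  fix t assume "t \<in> {..<m}"
  then have ud: "unit_demand m (type_valuation m t)" and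
    opt: "sel (type_valuation m t) \<in> optimal m p (type_valuation m t)"
    using assms(2) unit_demand_type_valuation by (auto simp: valid_choice_def set_valuation_pmf)
  then have l: "sel (type_valuation m t) \<in> lotteries m"
    by (simp add: optimal_def)
  have "p (sel (type_valuation m t)) \<le> lval m (type_valuation m t) (sel (type_valuation m t))"
    by (rule buy_many_price_le_lval[OF assms(1) ud opt])
  also have "\<dots> \<le> (\<Sum>j<m. type_valuation m t j)"
    unfolding lval_def
    by (rule sum_mono) (use l ud in \<open>auto simp: lotteries_def unit_demand_def intro: mult_left_le\<close>)
  moreover have "0 \<le> (\<Sum>j<m. sel (type_valuation m t) j)"
    using l by (simp add: lotteries_def sum_nonneg)
  ultimately show "p (sel (type_valuation m t)) - (\<Sum>j<m. sel (type_valuation m t) j)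
      \<le> (\<Sum>j<m. type_valuation m t j)"
    by linarith
qed

lemma BuyManyProfit_ge: "real m * weighted_share m \<le> BuyManyProfit m (\<lambda>_. 1) (valuation_pmf m)"
proof -
  let ?p = "ratio_pricing m (share m)"
  let ?Profit = "Profit m (\<lambda>_. 1) (valuation_pmf m) ?p (share_lottery_choice m)"
  have "buy_many m ?p"
    using two_le_m share_pos by (intro ratio_pricing_buy_many) auto
  moreover have "valid_choice m ?p (valuation_pmf m) (share_lottery_choice m)"
    using share_lottery_choice_type share_lottery_optimal
    by (auto simp: valid_choice_def set_valuation_pmf)
  moreover have "bdd_above {Profit m (\<lambda>_. 1) (valuation_pmf m) p sel | p sel.
      buy_many m p \<and> valid_choice m p (valuation_pmf m) sel}"
    by (rule bdd_aboveI[where M = "\<Sum>t<m. type_weight m t * (\<Sum>j<m. type_valuation m t j)"])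
      (auto intro: buy_many_Profit_le)
  ultimately have "?Profit \<le> BuyManyProfit m (\<lambda>_. 1) (valuation_pmf m)"
    unfolding BuyManyProfit_def by (intro cSup_upper) blast+
  moreover have "?Profit = (\<Sum>t<m. type_weight m t * (type_value m t - 1))"
    unfolding Profit_valuation_pmf
    by (intro sum.cong) (auto simp: share_lottery_choice_type ratio_pricing_share_lottery sum_share_lottery)
  moreover have "(\<Sum>t<m. type_weight m t * share m t) \<le> (\<Sum>t<m. type_weight m t * (type_value m t - 1))"
    by (intro sum_mono mult_left_mono) (auto simp: share_le_type_value_minus_one type_weight_nonneg)
  ultimately show ?thesis
    by (simp add: type_weight_mult_share)
qed

text \<open>The types that value their items at least at P are those with 2^t of order
(P - 1) (2^m - 1), and their weights decrease geometrically.\<close>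
lemma sum_type_weight_valuing_above_le:
  "(\<Sum>t<m. type_weight m t * (if P \<le> type_value m t then max (P - 1) 0 else 0)) \<le> 8 * weighted_share m"
proof (cases "P \<le> 1")
  case True
  then have "(\<Sum>t<m. type_weight m t * (if P \<le> type_value m t then max (P - 1) 0 else 0)) = 0"
    by (intro sum.neutral) simp
  then show ?thesis
    using weighted_share_pos by simp
next
  case False
  define A where "A = {t \<in> {..<m}. P \<le> type_value m t}"
  define x where "x = (P - 1) * share_denom m / 4"
  have "0 < x"
    using False share_denom_pos by (simp add: x_def)
  have "x \<le> 2 ^ t" if "t \<in> A" for t
  proof -
    have "P - 1 \<le> 4 * share m t"
      using that type_value_minus_one_le[of t] by (auto simp: A_def)
    then show ?thesis
      using share_denom_pos by (simp add: x_def share_def field_simps)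
  qed
  have "(\<Sum>t<m. type_weight m t * (if P \<le> type_value m t then max (P - 1) 0 else 0))
      = (\<Sum>t\<in>A. (P - 1) * (2 ^ (m - 1) / share_denom m) * (1/2) ^ t)"
    using False unfolding A_def
    by (simp add: sum.inter_filter[OF finite_lessThan, symmetric] type_weight_def if_distrib mult_ac cong: if_cong)
  also have "\<dots> = (P - 1) * (2 ^ (m - 1) / share_denom m) * (\<Sum>t\<in>A. (1/2::real) ^ t)"
    by (simp add: sum_distrib_left)
  also have "\<dots> \<le> (P - 1) * (2 ^ (m - 1) / share_denom m) * (2 / x)"
    using sum_half_power_le[OF \<open>0 < x\<close>] \<open>\<And>t. t \<in> A \<Longrightarrow> x \<le> 2 ^ t\<close> False share_denom_pos
    by (intro mult_left_mono) (auto simp: A_def)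
  also have "\<dots> = 8 * weighted_share m"
    using False share_denom_pos by (simp add: x_def weighted_share_def power2_eq_square field_simps)
  finally show ?thesis .
qed

lemma item_pricing_Profit_le:
  assumes q_nonneg: "\<forall>j<m. 0 \<le> q j" and choice: "valid_choice m (item_pricing m q) (valuation_pmf m) sel"
  shows "Profit m (\<lambda>_. 1) (valuation_pmf m) (item_pricing m q) sel \<le> 12 * weighted_share m"
proof -
  have "{..<m} \<noteq> {}"
    using two_le_m by (simp add: lessThan_empty_iff)
  then obtain js where "js \<in> {..<m}" and Min_eq: "Min (q ` {..<m}) = q js"
    by (rule obtains_MIN[OF finite_lessThan])
  then have js: "js < m" "\<forall>j<m. q js \<le> q j"
    by (auto simp flip: Min_eq)
  define profit where
    "profit t = item_pricing m q (sel (type_valuation m t)) - (\<Sum>j<m. sel (type_valuation m t) j)" for t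
  define g where "g t = (if q js \<le> type_value m t then max (q js - 1) 0 else 0)" for t
  have opt: "sel (type_valuation m t) \<in> optimal m (item_pricing m q) (all_but_one m (type_value m t) t)"
    if "t < m" for t
    using choice that by (auto simp: valid_choice_def set_valuation_pmf type_valuation_def)
  have other: "profit t \<le> g t" if "t < m" "js \<noteq> t" for t
    using all_but_one_item_profit_le_cheapest[OF type_value_ge_one q_nonneg js(1) that(2) js(2) opt]
      that(1) by (simp add: profit_def g_def)
  have cheapest: "type_weight m js * profit js \<le> 4 * weighted_share m"
  proof -
    have "profit js \<le> 4 * share m js"
      using all_but_one_item_profit_le(1)[OF type_value_ge_one opt, OF js(1) js(1)]
        type_value_minus_one_le[OF js(1)]
      by (simp add: profit_def)
    then show ?thesis
      using type_weight_nonneg[of js] type_weight_mult_share[OF js(1)]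
      by (metis mult_left_mono mult.left_commute)
  qed
  have "(\<Sum>t\<in>{..<m} - {js}. type_weight m t * profit t) \<le> (\<Sum>t\<in>{..<m} - {js}. type_weight m t * g t)"
    using other by (intro sum_mono mult_left_mono type_weight_nonneg) auto
  also have "\<dots> \<le> (\<Sum>t<m. type_weight m t * g t)"
    by (intro sum_mono2) (auto simp: g_def type_weight_nonneg)
  also have "\<dots> \<le> 8 * weighted_share m"
    unfolding g_def by (rule sum_type_weight_valuing_above_le)
  finally have "(\<Sum>t<m. type_weight m t * profit t) \<le> 8 * weighted_share m + 4 * weighted_share m"
    using cheapest js(1) by (simp add: sum.remove[of "{..<m}" js])
  then show ?thesis
    by (simp add: Profit_valuation_pmf profit_def)
qed

lemma cheap_item_choice_type:
  "t < m \<Longrightarrow> cheap_item_choice (type_valuation m t) = unit_lottery (if t = 0 then 1 else 0)"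
  using type_value_pos[of t] two_le_m
  by (auto simp: cheap_item_choice_def type_valuation_def all_but_one_def)

lemma SProfit_pos_le:
  "0 < SProfit m (\<lambda>_. 1) (valuation_pmf m) \<and> SProfit m (\<lambda>_. 1) (valuation_pmf m) \<le> 12 * weighted_share m"
proof -
  let ?P = "type_value m 0"
  let ?Profit = "Profit m (\<lambda>_. 1) (valuation_pmf m) (item_pricing m (\<lambda>_. ?P)) cheap_item_choice"
  define X where "X = {Profit m (\<lambda>_. 1) (valuation_pmf m) (item_pricing m q) sel | q sel.
      (\<forall>j<m. 0 \<le> q j) \<and> valid_choice m (item_pricing m q) (valuation_pmf m) sel}"
  have "0 < m" "0 \<le> ?P"
    using two_le_m type_value_pos[of 0] by auto
  have X_le: "\<forall>x\<in>X. x \<le> 12 * weighted_share m"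
    unfolding X_def using item_pricing_Profit_le by auto
  have "cheap_item_choice (type_valuation m t) \<in> optimal m (item_pricing m (\<lambda>_. ?P)) (type_valuation m t)"
    if "t < m" for t
    using that cheap_item_choice_type[OF that] two_le_m \<open>0 \<le> ?P\<close> type_value_0_le[OF that]
    by (auto simp: type_valuation_def intro!: unit_lottery_optimal_all_but_one)
  then have "valid_choice m (item_pricing m (\<lambda>_. ?P)) (valuation_pmf m) cheap_item_choice"
    by (auto simp: valid_choice_def set_valuation_pmf)
  then have "?Profit \<in> X"
    unfolding X_def using \<open>0 \<le> ?P\<close> by blast
  moreover have "?Profit = ?P - 1"
  proof -
    have "?Profit = (\<Sum>t<m. type_weight m t * (?P - 1))"
      unfolding Profit_valuation_pmf using two_le_m
      by (intro sum.cong) (auto simp: cheap_item_choice_type item_pricing_def sum_mult_unit_lottery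
          sum_mult_unit_lottery[where f = "\<lambda>_. 1", simplified])
    then show ?thesis
      by (simp add: sum_distrib_right[symmetric] sum_type_weight)
  qed
  moreover have "0 < ?P - 1"
    using share_le_type_value_minus_one[OF \<open>0 < m\<close>] share_pos[of 0] by simp
  moreover have "bdd_above X"
    using X_le by (auto intro: bdd_aboveI)
  ultimately have "0 < Sup X"
    using cSup_upper[of "?P - 1" X] by simp
  moreover have "Sup X \<le> 12 * weighted_share m"
    using X_le \<open>?Profit \<in> X\<close> by (intro cSup_least) auto
  ultimately show ?thesis
    by (simp add: SProfit_def X_def)
qed

end

theorem theorem5:
  shows "\<exists>C::real. C > 0 \<and> (\<forall>m::nat. m \<ge> 2 \<longrightarrow>
    (\<exists>(D::valuation pmf) (c::nat \<Rightarrow> real).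
        finite (set_pmf D) \<and> (\<forall>v\<in>set_pmf D. unit_demand m v) \<and> (\<forall>j<m. 0 \<le> c j) \<and>
        0 < SProfit m c D \<and>
        BuyManyProfit m c D \<ge> C * real m * SProfit m c D))"
proof (intro exI[of _ "1/12"] conjI allI impI)
  fix m :: nat assume "2 \<le> m"
  let ?D = "valuation_pmf m"
  have "1/12 * real m * SProfit m (\<lambda>_. 1) ?D \<le> 1/12 * real m * (12 * weighted_share m)"
    using SProfit_pos_le[OF \<open>2 \<le> m\<close>] by (intro mult_left_mono) auto
  also have "\<dots> = real m * weighted_share m"
    by simp
  also have "\<dots> \<le> BuyManyProfit m (\<lambda>_. 1) ?D"
    using \<open>2 \<le> m\<close> by (rule BuyManyProfit_ge)
  finally show "\<exists>D c. finite (set_pmf D) \<and> (\<forall>v\<in>set_pmf D. unit_demand m v) \<and> (\<forall>j<m. 0 \<le> c j) \<and>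
      0 < SProfit m c D \<and> BuyManyProfit m c D \<ge> 1/12 * real m * SProfit m c D"
    using SProfit_pos_le[OF \<open>2 \<le> m\<close>] unit_demand_type_valuation[OF \<open>2 \<le> m\<close>]
    by (intro exI[of _ ?D] exI[of _ "\<lambda>_. 1"]) (auto simp: set_valuation_pmf[OF \<open>2 \<le> m\<close>])
qed simp

end
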